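(* For all $n\ge1$, $w(D_{2n})=\frac1{n!}$ and $w(D_{2n+1})=\frac1{\Gamma(n+\frac32)}=\frac1{\sqrt\pi}\cdot\frac{2^{n+1}}{(2n+1)!!}$.
   Context: $\mathcal A$ is the free associative $\mathbb R$-algebra of noncommutative polynomials in symbols $N$ (degree 1) and $\Delta$ (degree 2); the weight $w:\mathcal A\to\mathbb R$ is the algebra homomorphism with $w(I)=1$, $w(N)=2$, $w(\Delta)=-1$. Define $R_{kj},S_{kj}$: $R_{00}=I$, $S_{00}=0$, $R_{kj}=S_{kj}=0$ if $k<0$ or $j<0$, otherwise $R_{kj}=-(N^2+\Delta)R_{k-1,j}+NS_{k-1,j}$, $S_{kj}=\Delta NR_{k-1,j}-\Delta S_{k-1,j}+NR_{k-1,j-1}$. With $\{a,b\}=\frac{\Gamma(a+b+\frac12)}{(a+b)!\Gamma(a+\frac12)}$, $Z_{n+1}=\sum_{j=0}^n\{n+1,j-1\}R_{n+j,j}$, $\alpha_n=\sum_{j=0}^{n+1}\{n,j\}S_{n+j,j}$, the heat content operators are $D_1=\frac2{\sqrt\pi}I$ and, for $n\ge1$, $D_{2n}=\frac1{\sqrt\pi}\sum_{i=1}^n\frac{\Gamma(i+\frac12)\Gamma(n-i+\frac12)}{n!}D_{2i-1}\alpha_{n-i}$, $D_{2n+1}=\frac1{\sqrt\pi}Z_{n+1}+\frac1{\sqrt\pi}\sum_{i=1}^n\frac{i!\Gamma(n-i+\frac12)}{\Gamma(n+\frac32)}D_{2i}\alpha_{n-i}$. *)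

theory Defs
  imports "HOL-Analysis.Analysis" "HOL-Library.Poly_Mapping"
begin

datatype gen = GenN | GenDelta

text \<open>Words in the two letters; the word monoid (concatenation) is written additively so
  that finitely supported real functions on words form the (noncommutative) monoid algebra,
  i.e. the free associative R-algebra on N and Delta.\<close>
datatype word = Word "gen list"

fun word_of :: "word \<Rightarrow> gen list" where "word_of (Word xs) = xs"

instantiation word :: monoid_add
begin
definition zero_word :: word where "zero_word = Word []"
definition plus_word :: "word \<Rightarrow> word \<Rightarrow> word" where
  "plus_word u v = Word (word_of u @ word_of v)"
instance
proof
  fix a b c :: word
  show "a + b + c = a + (b + c)" by (cases a; cases b; cases c) (simp add: plus_word_def)
  show "0 + a = a" by (cases a) (simp add: plus_word_def zero_word_def)
  show "a + 0 = a" by (cases a) (simp add: plus_word_def zero_word_def)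
qed
end

type_synonym ncpoly = "word \<Rightarrow>\<^sub>0 real"

definition cst :: "real \<Rightarrow> ncpoly" where "cst c = Poly_Mapping.single 0 c"
definition gN :: ncpoly where "gN = Poly_Mapping.single (Word [GenN]) 1"
definition gD :: ncpoly where "gD = Poly_Mapping.single (Word [GenDelta]) 1"

fun gen_weight :: "gen \<Rightarrow> real" where
  "gen_weight GenN = 2" | "gen_weight GenDelta = -1"

definition word_weight :: "word \<Rightarrow> real" where
  "word_weight u = prod_list (map gen_weight (word_of u))"

definition wt :: "ncpoly \<Rightarrow> real" where
  "wt p = (\<Sum>u\<in>Poly_Mapping.keys p. Poly_Mapping.lookup p u * word_weight u)"

fun RS :: "nat \<Rightarrow> nat \<Rightarrow> ncpoly \<times> ncpoly" where
  "RS 0 j = (if j = 0 then 1 else 0, 0)"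
| "RS (Suc k) j =
     (- (gN ^ 2 + gD) * fst (RS k j) + gN * snd (RS k j),
      gD * gN * fst (RS k j) - gD * snd (RS k j) + (if j = 0 then 0 else gN * fst (RS k (j - 1))))"

definition Rp :: "nat \<Rightarrow> nat \<Rightarrow> ncpoly" where "Rp k j = fst (RS k j)"
definition Sp :: "nat \<Rightarrow> nat \<Rightarrow> ncpoly" where "Sp k j = snd (RS k j)"

text \<open>The bracket {a,b} = Gamma(a+b+1/2) / ((a+b)! Gamma(a+1/2)), integer arguments
  (only used with a+b >= 0).\<close>
definition brace :: "int \<Rightarrow> int \<Rightarrow> real" where
  "brace a b = Gamma (of_int (a + b) + 1/2) / (fact (nat (a + b)) * Gamma (of_int a + 1/2))"

text \<open>Zp n = Z_{n+1}\<close>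
definition Zp :: "nat \<Rightarrow> ncpoly" where
  "Zp n = (\<Sum>j=0..n. cst (brace (int n + 1) (int j - 1)) * Rp (n + j) j)"

definition alpha :: "nat \<Rightarrow> ncpoly" where
  "alpha n = (\<Sum>j=0..n+1. cst (brace (int n) (int j)) * Sp (n + j) j)"

section \<open>Heat content operators D_m (m >= 1); D 0 is an unused dummy value\<close>

function D :: "nat \<Rightarrow> ncpoly" where
  "D m = (if m = 0 then 0
          else if m = 1 then cst (2 / sqrt pi)
          else if even m then
            (\<Sum>i=1..m div 2. cst (1 / sqrt pi * (Gamma (real i + 1/2) * Gamma (real (m div 2 - i) + 1/2)
                                   / fact (m div 2))) * D (2 * i - 1) * alpha (m div 2 - i))
          else
            cst (1 / sqrt pi) * Zp (m div 2)
            + (\<Sum>i=1..m div 2. cst (1 / sqrt pi * (fact i * Gamma (real (m div 2 - i) + 1/2)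
                                   / Gamma (real (m div 2) + 3/2))) * D (2 * i) * alpha (m div 2 - i)))"
  by auto
termination
  by (relation "Wellfounded.measure id") (auto, presburger)

definition odd_dfact :: "nat \<Rightarrow> nat" where
  "odd_dfact n = (\<Prod>k=0..n. 2 * k + 1)"

end

theory Submission
  imports Defs
begin

text \<open>The weight \<open>w\<close> is a ring homomorphism, so \<open>w(D\<^sub>m)\<close> obeys the recursion of
  \<open>D\<^sub>m\<close> with every operator replaced by its weight. The recursion for \<open>R\<^sub>k\<^sub>j, S\<^sub>k\<^sub>j\<close>
  becomes a linear recursion with closed form
  \<open>w(R\<^sub>k\<^sub>j) = (-1)\<^sup>k 4\<^sup>j (binom k (2j) + 2 binom k (2j+1))\<close>, and \<open>w(S\<^sub>k\<^sub>j)\<close> is read off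
  from the recursion for \<open>R\<close>. Consequently \<open>w(Z\<^sub>n\<^sub>+\<^sub>1)\<close> and \<open>w(\<alpha>\<^sub>n)\<close> are combinations
  of sums of one hypergeometric term, and for \<open>n \<ge> 1\<close> these sums vanish, as Gosper
  certificates show; moreover \<open>w(\<alpha>\<^sub>0) = 1\<close>. Hence only the summand \<open>i = n\<close> survives in
  the recursion for \<open>D\<^sub>m\<close>, and the values follow by induction on \<open>m\<close>.\<close>

lemma poly_mapping_sum_single:
  "p = (\<Sum>u\<in>Poly_Mapping.keys p. Poly_Mapping.single u (Poly_Mapping.lookup p u))"
proof (rule poly_mapping_eqI)
  fix v
  have "(\<Sum>u\<in>Poly_Mapping.keys p. Poly_Mapping.lookup (Poly_Mapping.single u (Poly_Mapping.lookup p u)) v)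
      = (\<Sum>u\<in>Poly_Mapping.keys p. if u = v then Poly_Mapping.lookup p u else 0)"
    by (rule sum.cong) (auto simp: lookup_single when_def)
  then show "Poly_Mapping.lookup p v = Poly_Mapping.lookup (\<Sum>u\<in>Poly_Mapping.keys p. Poly_Mapping.single u (Poly_Mapping.lookup p u)) v"
    by (simp add: lookup_sum sum.delta' in_keys_iff)
qed

lemma sum_keys_mult_character:
  fixes \<phi> :: "'a::monoid_add \<Rightarrow> 'b::comm_ring_1" and p q :: "'a \<Rightarrow>\<^sub>0 'b"
  assumes \<phi>_add: "\<And>u v. \<phi> (u + v) = \<phi> u * \<phi> v"
  shows "(\<Sum>u\<in>Poly_Mapping.keys (p * q). Poly_Mapping.lookup (p * q) u * \<phi> u)
       = (\<Sum>u\<in>Poly_Mapping.keys p. Poly_Mapping.lookup p u * \<phi> u)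
       * (\<Sum>u\<in>Poly_Mapping.keys q. Poly_Mapping.lookup q u * \<phi> u)"
proof -
  define E where "E r = (\<Sum>u\<in>Poly_Mapping.keys r. Poly_Mapping.lookup r u * \<phi> u)" for r
  have E_add: "E (r + s) = E r + E s" for r s
    unfolding E_def
    by (rule setsum_keys_plus_distrib[where f = "\<lambda>u c. c * \<phi> u"]) (simp_all add: distrib_right)
  have E_zero: "E 0 = 0"
    by (simp add: E_def)
  have E_sum: "E (sum f A) = (\<Sum>x\<in>A. E (f x))" for f :: "'c \<Rightarrow> 'a \<Rightarrow>\<^sub>0 'b" and A
    by (induction A rule: infinite_finite_induct) (simp_all add: E_add E_zero)
  have E_single: "E (Poly_Mapping.single u c) = c * \<phi> u" for u c
    by (cases "c = 0") (simp_all add: E_def)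
  have "p * q = (\<Sum>k\<in>Poly_Mapping.keys p. \<Sum>l\<in>Poly_Mapping.keys q.
      Poly_Mapping.single (k + l) (Poly_Mapping.lookup p k * Poly_Mapping.lookup q l))"
    by (subst poly_mapping_sum_single[of p], subst poly_mapping_sum_single[of q])
       (simp add: sum_product mult_single)
  then have "E (p * q) = (\<Sum>k\<in>Poly_Mapping.keys p. \<Sum>l\<in>Poly_Mapping.keys q.
      Poly_Mapping.lookup p k * \<phi> k * (Poly_Mapping.lookup q l * \<phi> l))"
    by (simp add: E_sum E_single \<phi>_add mult_ac)
  then show ?thesis
    by (simp add: E_def sum_product)
qed

lemma word_weight_zero [simp]: "word_weight 0 = 1"
  by (simp add: word_weight_def zero_word_def)

lemma word_weight_add: "word_weight (u + v) = word_weight u * word_weight v"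
  by (cases u; cases v) (simp add: word_weight_def plus_word_def)

lemma wt_add: "wt (p + q) = wt p + wt q"
  unfolding wt_def
  by (rule setsum_keys_plus_distrib[where f = "\<lambda>u c. c * word_weight u"]) (simp_all add: distrib_right)

lemma wt_mult: "wt (p * q) = wt p * wt q"
  unfolding wt_def by (rule sum_keys_mult_character) (rule word_weight_add)

lemma wt_single [simp]: "wt (Poly_Mapping.single u c) = c * word_weight u"
  by (cases "c = 0") (simp_all add: wt_def)

lemma wt_zero [simp]: "wt 0 = 0"
  by (simp add: wt_def)

lemma wt_one [simp]: "wt 1 = 1"
  using wt_single[of 0 1] by simp

lemma wt_uminus: "wt (- p) = - wt p"
  using wt_add[of p "- p"] by simp

lemma wt_diff: "wt (p - q) = wt p - wt q"
  unfolding diff_conv_add_uminus wt_add wt_uminus by simp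

lemma wt_sum: "wt (sum f A) = (\<Sum>x\<in>A. wt (f x))"
  by (induction A rule: infinite_finite_induct) (simp_all add: wt_add)

lemma wt_power: "wt (p ^ k) = wt p ^ k"
  by (induction k) (simp_all add: wt_mult)

lemma wt_cst [simp]: "wt (cst c) = c"
  by (simp add: cst_def)

lemma wt_gN [simp]: "wt gN = 2"
  by (simp add: gN_def word_weight_def)

lemma wt_gD [simp]: "wt gD = -1"
  by (simp add: gD_def word_weight_def)

text \<open>The transfer matrix of the weighted recursion, with a formal variable \<open>t\<close>
  marking \<open>j\<close>, has eigenvalues \<open>-1 \<plusminus> 2\<surd>t\<close>; expanding its powers gives this closed form.\<close>

definition rweight :: "nat \<Rightarrow> nat \<Rightarrow> real" where
  "rweight k j = (-1) ^ k * 4 ^ j * (real (k choose (2 * j)) + 2 * real (k choose (2 * j + 1)))"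

lemma rweight_recurrence:
  "rweight (Suc (Suc k)) j
     = - 2 * rweight (Suc k) j - rweight k j + (if j = 0 then 0 else 4 * rweight k (j - 1))"
proof (cases j)
  case 0
  then show ?thesis
    by (simp add: rweight_def numeral_2_eq_2 algebra_simps)
next
  case (Suc i)
  have "2 * j = Suc (Suc (2 * i))" "2 * j + 1 = Suc (Suc (Suc (2 * i)))" using Suc by simp_all
  then show ?thesis
    using Suc by (simp add: rweight_def numeral_2_eq_2 algebra_simps)
qed

lemma real_binomial_absorption:
  "real (Suc m) * real (k choose Suc m) = (real k - real m) * real (k choose m)"
  using gbinomial_mult_1[of "real k" m] by (simp add: binomial_gbinomial algebra_simps)

lemma rweight_eq_binomial:
  "(2 * real j + 1) * rweight k j = (-1) ^ k * 4 ^ j * (2 * real k - 2 * real j + 1) * real (k choose (2 * j))"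
proof -
  let ?s = "(-1) ^ k * 4 ^ j :: real"
  have "(2 * real j + 1) * rweight k j
      = ?s * ((2 * real j + 1) * real (k choose (2 * j)) + 2 * (real (Suc (2 * j)) * real (k choose Suc (2 * j))))"
    by (simp add: rweight_def algebra_simps)
  also have "\<dots> = ?s * ((2 * real j + 1) * real (k choose (2 * j)) + 2 * ((real k - 2 * real j) * real (k choose (2 * j))))"
    by (simp only: real_binomial_absorption) simp
  finally show ?thesis
    by (simp add: algebra_simps)
qed

lemma wt_Rp_Suc: "wt (Rp (Suc k) j) = -3 * wt (Rp k j) + 2 * wt (Sp k j)"
  by (simp add: Rp_def Sp_def wt_add wt_diff wt_uminus wt_mult wt_power)

lemma wt_Sp_Suc:
  "wt (Sp (Suc k) j) = -2 * wt (Rp k j) + wt (Sp k j) + (if j = 0 then 0 else 2 * wt (Rp k (j - 1)))"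
  by (simp add: Rp_def Sp_def wt_add wt_diff wt_mult)

lemma wt_Rp_Sp:
  "wt (Rp k j) = rweight k j \<and> wt (Sp k j) = (rweight (Suc k) j + 3 * rweight k j) / 2"
proof (induction k arbitrary: j)
  case 0
  then show ?case
    by (cases j) (simp_all add: Rp_def Sp_def rweight_def)
next
  case (Suc k)
  have R: "wt (Rp k i) = rweight k i"
    and S: "wt (Sp k i) = (rweight (Suc k) i + 3 * rweight k i) / 2" for i
    using Suc.IH by simp_all
  show ?case
    by (simp add: wt_Rp_Suc wt_Sp_Suc R S rweight_recurrence[of k] field_simps)
qed

lemma Gamma_plus_three_halves: "Gamma (real m + 3/2) = (real m + 1/2) * Gamma (real m + 1/2)"
proof -
  have "real m + 1/2 \<notin> \<int>\<^sub>\<le>\<^sub>0"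
    using nonpos_Ints_nonpos[of "real m + 1/2"] by linarith
  then show ?thesis
    using Gamma_plus1[of "real m + 1/2"] by (simp add: add.assoc)
qed

lemma Gamma_three_halves: "Gamma (3/2 :: real) = sqrt pi / 2"
  using Gamma_plus_three_halves[of 0] by (simp add: Gamma_one_half_real)

definition gamma_half_over_fact :: "nat \<Rightarrow> real" where
  "gamma_half_over_fact m = Gamma (real m + 1/2) / fact m"

lemma gamma_half_over_fact_0: "gamma_half_over_fact 0 = sqrt pi"
  by (simp add: gamma_half_over_fact_def Gamma_one_half_real)

lemma gamma_half_over_fact_Suc:
  "gamma_half_over_fact (Suc m) = (real m + 1/2) / (real m + 1) * gamma_half_over_fact m"
  using Gamma_plus_three_halves[of m] by (simp add: gamma_half_over_fact_def add.assoc add_ac)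

lemma brace_Zp_coefficient:
  "brace (int n + 1) (int j - 1) = gamma_half_over_fact (n + j) / Gamma (real n + 3/2)"
proof -
  have "int n + 1 + (int j - 1) = int (n + j)"
    by simp
  then show ?thesis
    unfolding brace_def gamma_half_over_fact_def by (simp add: add_ac nat_int_add)
qed

lemma brace_alpha_coefficient:
  "brace (int n) (int j) = gamma_half_over_fact (n + j) / Gamma (real n + 1/2)"
  unfolding brace_def gamma_half_over_fact_def by (simp flip: of_nat_add)

lemma real_binomial_Suc_Suc_step:
  "real (Suc k choose Suc (Suc m))
     = (real k + 1) * (real k - real m) / ((real m + 2) * (real m + 1)) * real (k choose m)"
proof -
  have top: "(real m + 2) * real (Suc k choose Suc (Suc m)) = (real k + 1) * real (k choose Suc m)"
    using arg_cong[OF Suc_times_binomial[of "Suc m" k], of real] by (simp only: of_nat_mult) (simp add: add.commute)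
  have "(real m + 2) * (real m + 1) * real (Suc k choose Suc (Suc m))
      = (real m + 1) * ((real m + 2) * real (Suc k choose Suc (Suc m)))"
    by (simp only: mult_ac)
  also have "\<dots> = (real k + 1) * (real (Suc m) * real (k choose Suc m))"
    by (simp only: top) (simp add: algebra_simps)
  also have "\<dots> = (real k + 1) * (real k - real m) * real (k choose m)"
    by (simp only: real_binomial_absorption mult.assoc)
  finally show ?thesis
    by (simp add: divide_simps mult_ac del: binomial_Suc_Suc)
qed

definition hterm :: "nat \<Rightarrow> nat \<Rightarrow> nat \<Rightarrow> real" where
  "hterm n a j = gamma_half_over_fact (n + j) * (-4) ^ j * real (n + a + j choose (2 * j)) / (2 * real j + 1)"

definition hratio :: "nat \<Rightarrow> nat \<Rightarrow> nat \<Rightarrow> real" where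
  "hratio n a j = - (2 * real n + 2 * real j + 1) * (real n + real a + real j + 1) * (real n + real a - real j)
                  / ((real n + real j + 1) * (real j + 1) * (2 * real j + 3))"

lemma hterm_Suc: "hterm n a (Suc j) = hratio n a j * hterm n a j"
proof -
  let ?x = "real j" and ?y = "real n" and ?b = "real a"
  let ?C = "real (n + a + j choose (2 * j))"
  let ?u = "(?y + ?x + 1/2) / (?y + ?x + 1)" and ?e = "(?y + ?b + ?x + 1) * (?y + ?b - ?x) / ((2 * ?x + 2) * (2 * ?x + 1))"
  have g: "gamma_half_over_fact (n + Suc j) = ?u * gamma_half_over_fact (n + j)"
    using gamma_half_over_fact_Suc[of "n + j"] by simp
  have c: "real (n + a + Suc j choose (2 * Suc j)) = ?e * ?C"
  proof -
    have "n + a + Suc j = Suc (n + a + j)" "2 * Suc j = Suc (Suc (2 * j))"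
      "real (n + a + j) + 1 = ?y + ?b + ?x + 1" "real (n + a + j) - real (2 * j) = ?y + ?b - ?x"
      "real (2 * j) + 2 = 2 * ?x + 2" "real (2 * j) + 1 = 2 * ?x + 1"
      by simp_all
    then show ?thesis
      by (simp only: real_binomial_Suc_Suc_step)
  qed
  have d: "2 * real (Suc j) + 1 = 2 * ?x + 3"
    by simp
  have rearrange: "(u * g) * (m * p) * (e * c) / d = (g * p * c) * (u * m * e / d)" for u g m p e c d :: real
    by (simp add: divide_inverse mult_ac)
  have ratio: "(y + x + 1/2) / (y + x + 1) * (-4) * ((y + b + x + 1) * (y + b - x) / ((2 * x + 2) * (2 * x + 1)))
      / (2 * x + 3)
      = - (2 * y + 2 * x + 1) * (y + b + x + 1) * (y + b - x) / ((y + x + 1) * (x + 1) * (2 * x + 3)) / (2 * x + 1)"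
    if "0 \<le> x" "0 \<le> y" for x y b :: real
  proof -
    have "y + x + 1 \<noteq> 0" "2 * x + 2 \<noteq> 0" "2 * x + 1 \<noteq> 0" "2 * x + 3 \<noteq> 0" "x + 1 \<noteq> 0"
      using that by linarith+
    then show ?thesis
      by (simp add: divide_simps) (simp add: algebra_simps)
  qed
  have "hterm n a (Suc j) = (?u * gamma_half_over_fact (n + j)) * ((-4) * (-4) ^ j) * (?e * ?C) / (2 * ?x + 3)"
    by (simp only: hterm_def g c d power_Suc)
  also have "\<dots> = (gamma_half_over_fact (n + j) * (-4) ^ j * ?C) * (?u * (-4) * ?e / (2 * ?x + 3))"
    by (rule rearrange)
  also have "?u * (-4) * ?e / (2 * ?x + 3) = hratio n a j / (2 * ?x + 1)"
    unfolding hratio_def by (rule ratio) simp_all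
  finally show ?thesis
    by (simp add: hterm_def mult_ac)
qed

lemma minus_four_power: "(-4 :: real) ^ j = (-1) ^ j * 4 ^ j"
  by (metis mult_minus1 power_mult_distrib)

lemma gamma_half_over_fact_rweight_eq_hterm:
  "gamma_half_over_fact (n + j) * rweight (n + a + j) j = (-1) ^ (n + a) * (2 * real (n + a) + 1) * hterm n a j"
proof -
  have "(2 * real j + 1) * rweight (n + a + j) j
      = (-1) ^ (n + a) * (-4) ^ j * (2 * real (n + a) + 1) * real (n + a + j choose (2 * j))"
    using rweight_eq_binomial[of j "n + a + j"] minus_four_power
    by (simp add: power_add algebra_simps)
  moreover have "2 * real j + 1 \<noteq> 0"
    by (simp add: add_nonneg_pos)
  ultimately show ?thesis
    unfolding hterm_def by (simp add: field_simps)
qed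

lemma sum_atMost_by_certificate:
  fixes t r q :: "nat \<Rightarrow> 'a::comm_ring_1"
  assumes t_Suc: "\<And>j. t (Suc j) = r j * t j"
    and q_0: "q 0 = 1"
    and q_Suc: "\<And>j. q j + r j = r j * q (Suc j)"
  shows "(\<Sum>i\<le>N. t i) = t N * q N"
proof (induction N)
  case 0
  then show ?case
    using q_0 by simp
next
  case (Suc N)
  have "(\<Sum>i\<le>Suc N. t i) = t N * (q N + r N)"
    using Suc t_Suc[of N] by (simp add: algebra_simps)
  also have "\<dots> = t (Suc N) * q (Suc N)"
    using q_Suc[of N] t_Suc[of N] by (simp add: mult_ac)
  finally show ?case .
qed

text \<open>The certificates \<open>q\<close> in the next two proofs are the output of Gosper's algorithm.\<close>

lemma sum_hterm_0_eq_0: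
  assumes "n \<ge> 1"
  shows "(\<Sum>j\<le>n. hterm n 0 j) = 0"
proof -
  let ?y = "real n"
  define q where "q j = (?y * (2 * ?y + 1) - real j * (2 * real j + 1)) / (?y * (2 * ?y + 1))" for j
  have "(\<Sum>j\<le>n. hterm n 0 j) = hterm n 0 n * q n"
  proof (rule sum_atMost_by_certificate[where r = "hratio n 0"])
    show "q 0 = 1"
      using assms by (simp add: q_def)
    fix j
    show "hterm n 0 (Suc j) = hratio n 0 j * hterm n 0 j"
      by (rule hterm_Suc)
    have "?y \<noteq> 0" "2 * ?y + 1 \<noteq> 0" "?y + real j + 1 \<noteq> 0" "real j + 1 \<noteq> 0" "2 * real j + 3 \<noteq> 0"
      using assms by auto
    then show "q j + hratio n 0 j = hratio n 0 j * q (Suc j)"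
      unfolding q_def hratio_def by (simp add: divide_simps) (simp add: algebra_simps power2_eq_square)
  qed
  also have "q n = 0"
    by (simp add: q_def)
  finally show ?thesis
    by simp
qed

lemma sum_hterm_1_eq_0:
  assumes "n \<ge> 1"
  shows "(\<Sum>j\<le>n + 1. hterm n 1 j) = 0"
proof -
  let ?y = "real n"
  define q where "q j = (?y + 1 - real j) * (?y * (2 * ?y + 1) * (2 * ?y + 3) + (8 * ?y^2 + 6 * ?y - 1) * real j
      + (4 * ?y - 2) * real j ^ 2) / (?y * (2 * ?y + 1) * (2 * ?y + 3) * (?y + 1 + real j))" for j
  have "(\<Sum>j\<le>n + 1. hterm n 1 j) = hterm n 1 (n + 1) * q (n + 1)"
  proof (rule sum_atMost_by_certificate[where r = "hratio n 1"])
    show "q 0 = 1"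
      using assms by (simp add: q_def)
    fix j
    show "hterm n 1 (Suc j) = hratio n 1 j * hterm n 1 j"
      by (rule hterm_Suc)
    have "?y \<noteq> 0" "2 * ?y + 1 \<noteq> 0" "2 * ?y + 3 \<noteq> 0" "?y + real j + 1 \<noteq> 0" "?y + 1 + real j \<noteq> 0"
      "?y + 1 + (real j + 1) \<noteq> 0" "real j + 1 \<noteq> 0" "2 * real j + 3 \<noteq> 0"
      using assms by auto
    then show "q j + hratio n 1 j = hratio n 1 j * q (Suc j)"
      unfolding q_def hratio_def by (simp add: divide_simps) (simp add: algebra_simps power2_eq_square)
  qed
  also have "q (n + 1) = 0"
    by (simp add: q_def)
  finally show ?thesis
    by simp
qed

lemma wt_Zp_eq_sum_hterm:
  "wt (Zp n) = (-1) ^ n * (2 * real n + 1) / Gamma (real n + 3/2) * (\<Sum>j\<le>n. hterm n 0 j)"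
proof -
  have "wt (Zp n) = (\<Sum>j\<le>n. brace (int n + 1) (int j - 1) * rweight (n + j) j)"
    unfolding Zp_def wt_sum by (simp add: wt_mult wt_Rp_Sp atLeast0AtMost)
  also have "\<dots> = (\<Sum>j\<le>n. (-1) ^ n * (2 * real n + 1) / Gamma (real n + 3/2) * hterm n 0 j)"
  proof (rule sum.cong)
    fix j
    have "brace (int n + 1) (int j - 1) * rweight (n + j) j
        = gamma_half_over_fact (n + j) * rweight (n + j) j / Gamma (real n + 3/2)"
      by (simp add: brace_Zp_coefficient)
    also have "\<dots> = (-1) ^ n * (2 * real n + 1) / Gamma (real n + 3/2) * hterm n 0 j"
      using gamma_half_over_fact_rweight_eq_hterm[of n j 0] by simp
    finally show "brace (int n + 1) (int j - 1) * rweight (n + j) j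
        = (-1) ^ n * (2 * real n + 1) / Gamma (real n + 3/2) * hterm n 0 j" .
  qed simp
  finally show ?thesis
    by (simp add: sum_distrib_left)
qed

lemma wt_alpha_eq_sum_hterm:
  "wt (alpha n) = (-1) ^ n / (2 * Gamma (real n + 1/2))
     * (3 * (2 * real n + 1) * (\<Sum>j\<le>n + 1. hterm n 0 j) - (2 * real n + 3) * (\<Sum>j\<le>n + 1. hterm n 1 j))"
proof -
  let ?c = "(-1) ^ n / (2 * Gamma (real n + 1/2))"
  have "wt (alpha n) = (\<Sum>j\<le>n + 1. brace (int n) (int j) * wt (Sp (n + j) j))"
    unfolding alpha_def wt_sum by (simp add: wt_mult atLeast0AtMost)
  also have "\<dots> = (\<Sum>j\<le>n + 1. ?c * (3 * (2 * real n + 1) * hterm n 0 j - (2 * real n + 3) * hterm n 1 j))"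
  proof (rule sum.cong)
    fix j
    have h0: "gamma_half_over_fact (n + j) * rweight (n + j) j
        = (-1) ^ n * (2 * real n + 1) * hterm n 0 j"
      using gamma_half_over_fact_rweight_eq_hterm[of n j 0] by simp
    have h1: "gamma_half_over_fact (n + j) * rweight (Suc (n + j)) j
        = - ((-1) ^ n * (2 * real n + 3) * hterm n 1 j)"
      using gamma_half_over_fact_rweight_eq_hterm[of n j 1] by simp
    have "brace (int n) (int j) * wt (Sp (n + j) j)
        = (gamma_half_over_fact (n + j) * rweight (Suc (n + j)) j
            + 3 * (gamma_half_over_fact (n + j) * rweight (n + j) j)) / (2 * Gamma (real n + 1/2))"
      using Gamma_real_pos[of "real n + 1/2"] by (simp add: brace_alpha_coefficient wt_Rp_Sp field_simps)
    also have "\<dots> = ?c * (3 * (2 * real n + 1) * hterm n 0 j - (2 * real n + 3) * hterm n 1 j)"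
      unfolding h0 h1 by (simp add: field_simps)
    finally show "brace (int n) (int j) * wt (Sp (n + j) j)
        = ?c * (3 * (2 * real n + 1) * hterm n 0 j - (2 * real n + 3) * hterm n 1 j)" .
  qed simp
  also have "\<dots> = ?c * (\<Sum>j\<le>n + 1. 3 * (2 * real n + 1) * hterm n 0 j - (2 * real n + 3) * hterm n 1 j)"
    by (rule sum_distrib_left[symmetric])
  finally show ?thesis
    by (simp only: sum_subtractf sum_distrib_left)
qed

lemma wt_Zp_eq_0:
  assumes "n \<ge> 1"
  shows "wt (Zp n) = 0"
  using sum_hterm_0_eq_0[OF assms] by (simp add: wt_Zp_eq_sum_hterm)

lemma wt_alpha_eq_0:
  assumes "n \<ge> 1"
  shows "wt (alpha n) = 0"
proof -
  have "hterm n 0 (n + 1) = 0"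
    by (simp add: hterm_def binomial_eq_0)
  then have "(\<Sum>j\<le>n + 1. hterm n 0 j) = 0"
    using sum_hterm_0_eq_0[OF assms] by simp
  then show ?thesis
    using sum_hterm_1_eq_0[OF assms] by (simp add: wt_alpha_eq_sum_hterm)
qed

lemma wt_alpha_0: "wt (alpha 0) = 1"
proof -
  have "(\<Sum>j\<le>1. hterm 0 0 j) = sqrt pi" "(\<Sum>j\<le>1. hterm 0 1 j) = sqrt pi / 3"
    by (simp_all add: hterm_def gamma_half_over_fact_Suc gamma_half_over_fact_0 numeral_2_eq_2)
  then show ?thesis
    by (simp add: wt_alpha_eq_sum_hterm Gamma_one_half_real)
qed

declare D.simps [simp del]

lemma D_1: "D 1 = cst (2 / sqrt pi)"
  by (simp add: D.simps)

lemma D_even: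
  assumes "n \<ge> 1"
  shows "D (2 * n) = (\<Sum>i = 1..n. cst (1 / sqrt pi * (Gamma (real i + 1/2) * Gamma (real (n - i) + 1/2) / fact n))
                                     * D (2 * i - 1) * alpha (n - i))"
  using assms by (subst D.simps) simp

lemma D_odd:
  assumes "n \<ge> 1"
  shows "D (2 * n + 1) = cst (1 / sqrt pi) * Zp n
           + (\<Sum>i = 1..n. cst (1 / sqrt pi * (fact i * Gamma (real (n - i) + 1/2) / Gamma (real n + 3/2)))
                            * D (2 * i) * alpha (n - i))"
  using assms by (subst D.simps) simp

lemma sum_times_wt_alpha:
  assumes "n \<ge> 1"
  shows "(\<Sum>i = 1..n. c i * wt (alpha (n - i))) = c n"
proof -
  have "(\<Sum>i = 1..n. c i * wt (alpha (n - i))) = (\<Sum>i\<in>{n}. c i * wt (alpha (n - i)))"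
    by (rule sum.mono_neutral_right) (use assms in \<open>auto simp: wt_alpha_eq_0\<close>)
  then show ?thesis
    by (simp add: wt_alpha_0)
qed

lemma wt_D_even_step:
  assumes "n \<ge> 1" and odd: "wt (D (2 * n - 1)) = 1 / Gamma (real n + 1/2)"
  shows "wt (D (2 * n)) = 1 / fact n"
proof -
  have "wt (D (2 * n)) = (\<Sum>i = 1..n. 1 / sqrt pi * (Gamma (real i + 1/2) * Gamma (real (n - i) + 1/2) / fact n)
                                     * wt (D (2 * i - 1)) * wt (alpha (n - i)))"
    unfolding D_even[OF assms(1)] wt_sum wt_mult wt_cst ..
  also have "\<dots> = 1 / sqrt pi * (Gamma (real n + 1/2) * Gamma (real (n - n) + 1/2) / fact n) * wt (D (2 * n - 1))"
    by (rule sum_times_wt_alpha[OF assms(1)])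
  also have "\<dots> = 1 / fact n"
  proof -
    have "Gamma (real n + 1/2) > 0"
      by (rule Gamma_real_pos) simp
    then have "Gamma (real n + 1/2) \<noteq> 0"
      by linarith
    then show ?thesis
      unfolding odd by (simp add: Gamma_one_half_real)
  qed
  finally show ?thesis .
qed

lemma wt_D_odd_step:
  assumes "n \<ge> 1" and even: "wt (D (2 * n)) = 1 / fact n"
  shows "wt (D (2 * n + 1)) = 1 / Gamma (real n + 3/2)"
proof -
  have "wt (D (2 * n + 1)) = 1 / sqrt pi * wt (Zp n)
      + (\<Sum>i = 1..n. 1 / sqrt pi * (fact i * Gamma (real (n - i) + 1/2) / Gamma (real n + 3/2))
                       * wt (D (2 * i)) * wt (alpha (n - i)))"
    unfolding D_odd[OF assms(1)] wt_add wt_sum wt_mult wt_cst ..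
  also have "\<dots> = 1 / sqrt pi * (fact n * Gamma (real (n - n) + 1/2) / Gamma (real n + 3/2)) * wt (D (2 * n))"
    unfolding sum_times_wt_alpha[OF assms(1)] wt_Zp_eq_0[OF assms(1)] by simp
  also have "\<dots> = 1 / Gamma (real n + 3/2)"
    by (simp add: even Gamma_one_half_real)
  finally show ?thesis .
qed

lemma wt_D_odd: "wt (D (2 * n + 1)) = 1 / Gamma (real n + 3/2)"
proof (induction n)
  case 0
  have "wt (D 1) = 2 / sqrt pi"
    unfolding D_1 by simp
  then show ?case
    by (simp add: Gamma_three_halves)
next
  case (Suc n)
  have "2 * Suc n - 1 = 2 * n + 1" "real (Suc n) + 1/2 = real n + 3/2"
    by simp_all
  then have "wt (D (2 * Suc n - 1)) = 1 / Gamma (real (Suc n) + 1/2)"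
    using Suc.IH by (simp only:)
  then have "wt (D (2 * Suc n)) = 1 / fact (Suc n)"
    by (rule wt_D_even_step[rotated]) simp
  then show ?case
    by (rule wt_D_odd_step[rotated]) simp
qed

lemma wt_D_even:
  assumes "n \<ge> 1"
  shows "wt (D (2 * n)) = 1 / fact n"
proof (rule wt_D_even_step[OF assms])
  have "2 * n - 1 = 2 * (n - 1) + 1" "real (n - 1) + 3/2 = real n + 1/2"
    using assms by (simp_all add: of_nat_diff)
  then show "wt (D (2 * n - 1)) = 1 / Gamma (real n + 1/2)"
    using wt_D_odd[of "n - 1"] by (simp add: add.commute)
qed

lemma Gamma_plus_three_halves_odd_dfact:
  "Gamma (real n + 3/2) = sqrt pi * real (odd_dfact n) / 2 ^ (n + 1)"
proof (induction n)
  case 0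
  then show ?case
    by (simp add: Gamma_three_halves odd_dfact_def)
next
  case (Suc n)
  have dfact: "odd_dfact (Suc n) = odd_dfact n * (2 * n + 3)"
    by (simp add: odd_dfact_def algebra_simps)
  have "Gamma (real (Suc n) + 3/2) = (real n + 3/2) * Gamma (real n + 3/2)"
    using Gamma_plus_three_halves[of "Suc n"] by (simp add: add_ac)
  then show ?case
    unfolding Suc.IH dfact by (simp add: field_simps)
qed

theorem proposition5p1:
  fixes n :: nat
  assumes "n \<ge> 1"
  shows "wt (D (2 * n)) = 1 / fact n
         \<and> wt (D (2 * n + 1)) = 1 / Gamma (real n + 3/2)
         \<and> 1 / Gamma (real n + 3/2) = 1 / sqrt pi * (2 ^ (n + 1) / real (odd_dfact n))"
  using wt_D_even[OF assms] wt_D_odd[of n] by (simp add: Gamma_plus_three_halves_odd_dfact)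

end
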